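(* Let $M$ be a matroid on a finite set $E$ with $r(M)>0$. If $M$ is a unique expansion matroid, then $M$ is a union minimal matroid.
   Context: For a matroid $M=(E,\mathcal{I})$: $\mathcal{I}(M)$ its independent sets, $\mathcal{B}(M)$ its bases, $r(M)$ the size of a base, $\cup\mathcal{B}(M)$ the union of all bases. For $r(M)>0$, $s(M)=\{A\in\mathcal{I}(M): |A|=r(M)-1\}$. $M$ is a unique expansion matroid if for every $B\in\mathcal{B}(M)$ and every $A\in s(M)$, whenever $e_1,e_2\in B$ satisfy $A\cup\{e_1\}\in\mathcal{B}(M)$ and $A\cup\{e_2\}\in\mathcal{B}(M)$, then $e_1=e_2$. $M$ is union minimal if for every matroid $M_1$ on $E$ with $\cup\mathcal{B}(M_1)=\cup\mathcal{B}(M)$ and $\mathcal{B}(M_1)\subseteq\mathcal{B}(M)$ we have $\mathcal{B}(M_1)=\mathcal{B}(M)$. *)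

theory Defs
  imports Main
begin

definition matroid :: "'a set \<Rightarrow> 'a set set \<Rightarrow> bool" where
  "matroid E \<I> \<longleftrightarrow>
     finite E \<and>
     (\<forall>A\<in>\<I>. A \<subseteq> E) \<and>
     {} \<in> \<I> \<and>
     (\<forall>A B. B \<in> \<I> \<longrightarrow> A \<subseteq> B \<longrightarrow> A \<in> \<I>) \<and>
     (\<forall>A B. A \<in> \<I> \<longrightarrow> B \<in> \<I> \<longrightarrow> card A < card B \<longrightarrow>
        (\<exists>e\<in>B - A. insert e A \<in> \<I>))"

definition bases :: "'a set set \<Rightarrow> 'a set set" where
  "bases \<I> = {B \<in> \<I>. \<forall>C\<in>\<I>. B \<subseteq> C \<longrightarrow> C = B}"

definition mrank :: "'a set set \<Rightarrow> nat" where
  "mrank \<I> = card (SOME B. B \<in> bases \<I>)"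

definition s_sets :: "'a set set \<Rightarrow> 'a set set" where
  "s_sets \<I> = {A \<in> \<I>. card A = mrank \<I> - 1}"

definition unique_expansion :: "'a set set \<Rightarrow> bool" where
  "unique_expansion \<I> \<longleftrightarrow>
     (\<forall>B\<in>bases \<I>. \<forall>A\<in>s_sets \<I>. \<forall>e1\<in>B. \<forall>e2\<in>B.
        insert e1 A \<in> bases \<I> \<longrightarrow> insert e2 A \<in> bases \<I> \<longrightarrow> e1 = e2)"

definition union_minimal :: "'a set \<Rightarrow> 'a set set \<Rightarrow> bool" where
  "union_minimal E \<I> \<longleftrightarrow>
     (\<forall>\<I>1. matroid E \<I>1 \<longrightarrow> \<Union>(bases \<I>1) = \<Union>(bases \<I>) \<longrightarrow>
        bases \<I>1 \<subseteq> bases \<I> \<longrightarrow> bases \<I>1 = bases \<I>)"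

end

theory Submission
  imports Defs
begin

text \<open>
  Let every base of \<open>M\<^sub>1\<close> be a base of \<open>M\<close>, with the same union of bases, and fix a base
  \<open>B\<close> of \<open>M\<close>. Starting from any base \<open>B\<^sub>1\<close> of \<open>M\<^sub>1\<close>, drop an element \<open>x \<notin> B\<close>
  to get \<open>A \<in> s(M)\<close> and extend \<open>A\<close> by some \<open>e \<in> B\<close> to a base of \<open>M\<close>. Since \<open>e\<close>
  lies in a base \<open>B\<^sub>2\<close> of \<open>M\<^sub>1\<close>, \<open>A\<close> also extends to a base \<open>A + f\<close> of \<open>M\<^sub>1\<close> with
  \<open>f \<in> B\<^sub>2\<close>; both \<open>A + e\<close> and \<open>A + f\<close> are bases of \<open>M\<close> and \<open>e, f\<close> lie in the base
  \<open>B\<^sub>2\<close>, so unique expansion forces \<open>e = f\<close>. Thus \<open>A + e\<close> is a base of \<open>M\<^sub>1\<close>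
  closer to \<open>B\<close>, and iterating shows \<open>B\<close> is a base of \<open>M\<^sub>1\<close>.
\<close>

lemma matroid_indep_finite: "matroid E I \<Longrightarrow> A \<in> I \<Longrightarrow> finite A"
  unfolding matroid_def by (meson finite_subset)

lemma matroid_indep_subset: "matroid E I \<Longrightarrow> B \<in> I \<Longrightarrow> A \<subseteq> B \<Longrightarrow> A \<in> I"
  unfolding matroid_def by blast

lemma matroid_augment:
  "matroid E I \<Longrightarrow> A \<in> I \<Longrightarrow> B \<in> I \<Longrightarrow> card A < card B \<Longrightarrow> \<exists>e\<in>B - A. insert e A \<in> I"
  unfolding matroid_def by blast

lemma bases_indep: "B \<in> bases I \<Longrightarrow> B \<in> I"
  unfolding bases_def by blast

lemma bases_nonempty:
  assumes m: "matroid E I"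
  shows "bases I \<noteq> {}"
proof -
  have "I \<subseteq> Pow E" "finite E" "I \<noteq> {}"
    using m unfolding matroid_def by blast+
  then have "finite I" "I \<noteq> {}"
    by (auto intro: finite_subset)
  then obtain B where B: "B \<in> I" "card B = Max (card ` I)"
    by (metis (mono_tags, lifting) Max_in finite_imageI image_iff image_is_empty)
  have "C = B" if "C \<in> I" "B \<subseteq> C" for C
  proof -
    have "card C \<le> card B"
      using \<open>finite I\<close> that(1) B(2) by simp
    then show ?thesis
      using that matroid_indep_finite[OF m \<open>C \<in> I\<close>] card_seteq by blast
  qed
  then have "B \<in> bases I"
    unfolding bases_def using B(1) by blast
  then show ?thesis by blast
qed

lemma bases_card_eq:
  assumes m: "matroid E I" and "B \<in> bases I" "C \<in> bases I"
  shows "card B = card C"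
proof -
  have "\<not> card B < card C" if B: "B \<in> bases I" and C: "C \<in> bases I" for B C
  proof
    assume "card B < card C"
    then obtain e where "e \<in> C - B" "insert e B \<in> I"
      using matroid_augment[OF m bases_indep[OF B] bases_indep[OF C]] by blast
    then show False
      using \<open>B \<in> bases I\<close> unfolding bases_def by blast
  qed
  then show ?thesis
    using assms(2,3) by (meson linorder_neqE_nat)
qed

lemma indep_card_eq_base:
  assumes m: "matroid E I" and A: "A \<in> I" and B: "B \<in> bases I" and "card A = card B"
  shows "A \<in> bases I"
proof -
  have "C = A" if "C \<in> I" "A \<subseteq> C" for C
  proof (rule ccontr)
    assume "C \<noteq> A"
    then have "card B < card C"
      using that matroid_indep_finite[OF m] \<open>card A = card B\<close> by (metis psubsetI psubset_card_mono)
    then obtain e where "e \<in> C - B" "insert e B \<in> I"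
      using matroid_augment[OF m] bases_indep[OF B] \<open>C \<in> I\<close> by blast
    then show False
      using B unfolding bases_def by blast
  qed
  then show ?thesis
    unfolding bases_def using A by blast
qed

lemma mrank_eq_card_base:
  assumes m: "matroid E I" and B: "B \<in> bases I"
  shows "mrank I = card B"
proof -
  have "(SOME B. B \<in> bases I) \<in> bases I"
    using B by (rule someI)
  then show ?thesis
    unfolding mrank_def using bases_card_eq[OF m] B by blast
qed

lemma indep_insert_base:
  assumes m: "matroid E I" and A: "A \<in> I" and B: "B \<in> bases I" and "card B = Suc (card A)"
  shows "\<exists>e\<in>B. insert e A \<in> bases I"
proof -
  obtain e where e: "e \<in> B - A" "insert e A \<in> I"
    using matroid_augment[OF m A bases_indep[OF B]] \<open>card B = Suc (card A)\<close> by auto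
  then have "card (insert e A) = card B"
    using matroid_indep_finite[OF m A] \<open>card B = Suc (card A)\<close> by simp
  then show ?thesis
    using e indep_card_eq_base[OF m e(2) B] by blast
qed

lemma unique_expansion_exchange:
  assumes m: "matroid E I" and m1: "matroid E I1"
    and sub: "bases I1 \<subseteq> bases I" and union: "\<Union>(bases I) \<subseteq> \<Union>(bases I1)"
    and ue: "unique_expansion I"
    and B: "B \<in> bases I" and B1: "B1 \<in> bases I1" and x: "x \<in> B1"
  shows "\<exists>e\<in>B. insert e (B1 - {x}) \<in> bases I1"
proof -
  define A where "A = B1 - {x}"
  have B1_I: "B1 \<in> bases I"
    using B1 sub by blast
  have A_I1: "A \<in> I1"
    unfolding A_def using matroid_indep_subset[OF m1 bases_indep[OF B1]] by blast
  have A_I: "A \<in> I"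
    unfolding A_def using matroid_indep_subset[OF m bases_indep[OF B1_I]] by blast
  have card_B1: "card B1 = Suc (card A)"
    unfolding A_def using card.remove[OF matroid_indep_finite[OF m1 bases_indep[OF B1]] x] .
  have A_s: "A \<in> s_sets I"
    unfolding s_sets_def using A_I card_B1 mrank_eq_card_base[OF m B1_I] by simp
  have "card B = Suc (card A)"
    using card_B1 bases_card_eq[OF m B B1_I] by simp
  then obtain e where e: "e \<in> B" "insert e A \<in> bases I"
    using indep_insert_base[OF m A_I B] by blast
  obtain B2 where B2: "B2 \<in> bases I1" "e \<in> B2"
    using union e B by blast
  have "card B2 = Suc (card A)"
    using card_B1 bases_card_eq[OF m1 B2(1) B1] by simp
  then obtain f where f: "f \<in> B2" "insert f A \<in> bases I1"
    using indep_insert_base[OF m1 A_I1 B2(1)] by blast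
  have "B2 \<in> bases I" "insert f A \<in> bases I"
    using B2(1) f(2) sub by blast+
  then have "e = f"
    using ue A_s B2(2) f(1) e(2) unfolding unique_expansion_def by blast
  then show ?thesis
    using e(1) f(2) unfolding A_def by blast
qed

lemma unique_expansion_base_in_sub_bases:
  assumes m: "matroid E I" and m1: "matroid E I1"
    and sub: "bases I1 \<subseteq> bases I" and union: "\<Union>(bases I) \<subseteq> \<Union>(bases I1)"
    and ue: "unique_expansion I"
    and B: "B \<in> bases I" and B1: "B1 \<in> bases I1"
  shows "B \<in> bases I1"
  using B1
proof (induction "card (B1 - B)" arbitrary: B1)
  case 0
  have "finite B1"
    using matroid_indep_finite[OF m1 bases_indep[OF "0.prems"]] .
  then have "B1 \<subseteq> B"
    using "0.hyps" by simp
  moreover have "B1 \<in> I" "B \<in> I"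
    using "0.prems" sub B by (auto dest: bases_indep)
  ultimately have "B1 = B"
    using "0.prems" sub unfolding bases_def by blast
  then show ?case
    using "0.prems" by simp
next
  case (Suc n)
  then obtain x where x: "x \<in> B1" "x \<notin> B"
    by (metis Diff_iff card.empty ex_in_conv nat.distinct(1))
  obtain e where e: "e \<in> B" "insert e (B1 - {x}) \<in> bases I1"
    using unique_expansion_exchange[OF m m1 sub union ue B Suc.prems x(1)] by blast
  have "insert e (B1 - {x}) - B = (B1 - B) - {x}"
    using e(1) by blast
  moreover have "card ((B1 - B) - {x}) = n"
    using Suc.hyps(2) x by simp
  ultimately show ?case
    using Suc.hyps(1) e(2) by metis
qed

theorem theorem10:
  fixes E :: "'a set" and \<I> :: "'a set set"
  assumes "matroid E \<I>"
    and "mrank \<I> > 0"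
    and "unique_expansion \<I>"
  shows "union_minimal E \<I>"
  unfolding union_minimal_def
proof (intro allI impI)
  fix I1
  assume m1: "matroid E I1" and union: "\<Union>(bases I1) = \<Union>(bases \<I>)"
    and sub: "bases I1 \<subseteq> bases \<I>"
  obtain B1 where "B1 \<in> bases I1"
    using bases_nonempty[OF m1] by blast
  then have "bases \<I> \<subseteq> bases I1"
    using unique_expansion_base_in_sub_bases[OF assms(1) m1 sub _ assms(3)] union by blast
  with sub show "bases I1 = bases \<I>"
    by blast
qed

end
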